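(* Let $\mathbf{G}$ be an $n\times n$ real positive definite matrix that admits a decomposition $\mathbf{G}=\mathbf{D}-\mathbf{V}\mathbf{V}^T$, where $\mathbf{D}$ is an $n\times n$ diagonal matrix and $\mathbf{V}$ is an $n\times k$ real matrix with linearly independent columns. Let $\mathbf{a}^*$ be any minimizer of $f(\mathbf{a})=\mathbf{a}^T\mathbf{G}\mathbf{a}$ over $\mathbf{a}\in\mathbb{Z}^n\setminus\{\mathbf{0}\}$. Then: (a) either $\mathbf{a}^*=\pm\mathbf{u}_i$ for some $i$, or there exists $\mathbf{x}\in\mathbb{R}^k$ such that, elementwise, $$\mathbf{a}^*-\tfrac12\mathbf{1}<\mathbf{D}^{-1}\mathbf{V}\mathbf{x}<\mathbf{a}^*+\tfrac12\mathbf{1},$$ and hence $\mathbf{a}^*=\lfloor\mathbf{D}^{-1}\mathbf{V}\mathbf{x}\rceil$ (componentwise rounding to the nearest integer); (b) $\|\mathbf{a}^*\|\le\sqrt{G_{\min}/\lambda_{\min}}$, where $G_{\min}$ is the smallest diagonal entry of $\mathbf{G}$ and $\lambda_{\min}$ the smallest eigenvalue of $\mathbf{G}$.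
   Context: Such a decomposition is called a $DP^k$ decomposition ($\mathbf{P}=\mathbf{V}\mathbf{V}^T$ is positive semidefinite of rank $k$); since $\mathbf{G}$ is positive definite and $\mathbf{P}$ positive semidefinite, all diagonal entries of $\mathbf{D}$ are strictly positive, so $\mathbf{D}^{-1}$ exists. $\mathbf{1}$ is the all-ones vector, $\mathbf{u}_i$ the $i$-th standard unit vector of $\mathbb{R}^n$, $\|\cdot\|$ the Euclidean norm; vector inequalities are elementwise. *)

theory Defs
  imports "HOL-Analysis.Analysis"
begin

definition pos_def_mat :: "real^'n^'n \<Rightarrow> bool" where
  "pos_def_mat G \<longleftrightarrow> transpose G = G \<and> (\<forall>x. x \<noteq> 0 \<longrightarrow> x \<bullet> (G *v x) > 0)"

definition diagonal_mat :: "real^'n^'n \<Rightarrow> bool" where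
  "diagonal_mat D \<longleftrightarrow> (\<forall>i j. i \<noteq> j \<longrightarrow> D $ i $ j = 0)"

definition lin_indep_cols :: "real^'k^'n \<Rightarrow> bool" where
  "lin_indep_cols V \<longleftrightarrow> (\<forall>x. V *v x = 0 \<longrightarrow> x = 0)"

definition int_vec :: "real^'n \<Rightarrow> bool" where
  "int_vec a \<longleftrightarrow> (\<forall>i. a $ i \<in> \<int>)"

definition real_eigenvalue :: "real^'n^'n \<Rightarrow> real \<Rightarrow> bool" where
  "real_eigenvalue G l \<longleftrightarrow> (\<exists>v. v \<noteq> 0 \<and> G *v v = l *\<^sub>R v)"

definition lambda_min :: "real^'n^'n \<Rightarrow> real" where
  "lambda_min G = Min {l. real_eigenvalue G l}"

definition G_min :: "real^'n^'n \<Rightarrow> real" where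
  "G_min G = Min {G $ i $ i | i. True}"

end

theory Submission
  imports Defs
begin

text \<open>
  Comparing the minimiser \<open>a\<close> with the admissible vectors \<open>\<plusminus>u\<^sub>i\<close> gives
  \<open>a\<^sup>T G a \<le> G\<^sub>i\<^sub>i\<close>, which together with \<open>\<lambda>\<^sub>m\<^sub>i\<^sub>n \<parallel>a\<parallel>\<^sup>2 \<le> a\<^sup>T G a\<close> is (b).
  Comparing it with \<open>a \<plusminus> u\<^sub>i\<close> (admissible unless \<open>a = \<minusplus>u\<^sub>i\<close>) gives
  \<open>2 \<bar>(G a)\<^sub>i\<bar> \<le> G\<^sub>i\<^sub>i\<close>. For (a) take \<open>x = V\<^sup>T a\<close>: then
  \<open>D\<^sup>-\<^sup>1 V x = a - D\<^sup>-\<^sup>1 G a\<close>, and since \<open>D\<^sub>i\<^sub>i = G\<^sub>i\<^sub>i + \<parallel>V\<^sub>i\<parallel>\<^sup>2\<close> the perturbation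
  \<open>(G a)\<^sub>i / D\<^sub>i\<^sub>i\<close> has modulus below \<open>1/2\<close>; when row \<open>V\<^sub>i\<close> vanishes the bound
  forces \<open>a\<^sub>i = 0 = (G a)\<^sub>i\<close>.
\<close>

lemma inner_matrix_vector_symmetric:
  fixes G :: "real^'n^'n"
  assumes "transpose G = G"
  shows "x \<bullet> (G *v y) = y \<bullet> (G *v x)"
  by (metis assms dot_lmul_matrix inner_commute transpose_matrix_vector)

lemma quadratic_form_add_scaleR:
  fixes G :: "real^'n^'n"
  assumes "transpose G = G"
  shows "(x + t *\<^sub>R y) \<bullet> (G *v (x + t *\<^sub>R y)) =
     x \<bullet> (G *v x) + 2 * t * (y \<bullet> (G *v x)) + t\<^sup>2 * (y \<bullet> (G *v y))"
  using inner_matrix_vector_symmetric[OF assms, of x y]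
  by (simp add: matrix_vector_right_distrib matrix_vector_mult_scaleR inner_add_left
      inner_add_right power2_eq_square algebra_simps)

lemma quadratic_form_axis:
  fixes G :: "real^'n^'n"
  shows "axis i 1 \<bullet> (G *v axis i 1) = G $ i $ i"
  by (simp add: inner_axis' matrix_vector_mult_basis column_def)

lemma quadratic_form_add_axis:
  fixes G :: "real^'n^'n"
  assumes "transpose G = G"
  shows "(b + t *\<^sub>R axis i 1) \<bullet> (G *v (b + t *\<^sub>R axis i 1)) =
     b \<bullet> (G *v b) + 2 * t * (G *v b) $ i + t\<^sup>2 * G $ i $ i"
  using quadratic_form_add_scaleR[OF assms, of b t "axis i 1"]
  by (simp add: inner_axis' matrix_vector_mult_basis column_def)

lemma quadratic_form_eigenvector:
  fixes G :: "real^'n^'n"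
  assumes "G *v v = l *\<^sub>R v"
  shows "v \<bullet> (G *v v) = l * (norm v)\<^sup>2"
  using assms by (simp only: inner_scaleR_right dot_square_norm)

lemma pos_def_mat_diag_pos:
  assumes "pos_def_mat G"
  shows "0 < G $ i $ i"
  using assms quadratic_form_axis[of i G] unfolding pos_def_mat_def
  by (metis axis_eq_0_iff zero_neq_one)

section \<open>The smallest eigenvalue of a symmetric matrix\<close>

text \<open>A vector attaining the Rayleigh lower bound \<open>m\<close> is an eigenvector: otherwise moving it
  slightly against \<open>w = G x - m x\<close> would push the quadratic form below \<open>m \<parallel>\<cdot>\<parallel>\<^sup>2\<close>.\<close>

lemma rayleigh_bound_attained_imp_eigenvector:
  fixes G :: "real^'n^'n"
  assumes sym: "transpose G = G"
    and bound: "\<And>z. m * (norm z)\<^sup>2 \<le> z \<bullet> (G *v z)"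
    and attained: "x \<bullet> (G *v x) = m * (norm x)\<^sup>2"
  shows "G *v x = m *\<^sub>R x"
proof -
  define q where "q z = z \<bullet> (G *v z) - m * (norm z)\<^sup>2" for z
  define w where "w = G *v x - m *\<^sub>R x"
  have q_nonneg: "0 \<le> q z" for z
    using bound[of z] by (simp add: q_def)
  have q_shift: "q (x + t *\<^sub>R y) = 2 * t * (y \<bullet> w) + t\<^sup>2 * q y" for t y
  proof -
    have norm: "(norm (x + t *\<^sub>R y))\<^sup>2 = (norm x)\<^sup>2 + 2 * t * (y \<bullet> x) + t\<^sup>2 * (norm y)\<^sup>2"
      unfolding power2_norm_eq_inner
      by (simp add: inner_add_left inner_add_right inner_commute power2_eq_square algebra_simps)
    have yw: "y \<bullet> (G *v x) = y \<bullet> w + m * (y \<bullet> x)"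
      by (simp add: w_def inner_diff_right)
    show ?thesis
      unfolding q_def quadratic_form_add_scaleR[OF sym] norm yw attained
      by (simp add: algebra_simps)
  qed
  show ?thesis
  proof (rule ccontr)
    assume "G *v x \<noteq> m *\<^sub>R x"
    then have W: "0 < w \<bullet> w" by (simp add: w_def)
    define c where "c = q w"
    define t where "t = - (w \<bullet> w) / (c + 1)"
    have c: "0 \<le> c" using q_nonneg by (simp add: c_def)
    have "0 \<le> 2 * t * (w \<bullet> w) + t\<^sup>2 * c"
      using q_nonneg[of "x + t *\<^sub>R w"] by (simp add: q_shift c_def)
    also have "\<dots> = (w \<bullet> w)\<^sup>2 * (c - 2 * (c + 1)) / (c + 1)\<^sup>2"
      using c unfolding t_def by (simp add: divide_simps power2_eq_square) (simp add: algebra_simps)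
    also have "\<dots> < 0"
      using W c by (intro divide_neg_pos mult_pos_neg) auto
    finally show False by simp
  qed
qed

lemma symmetric_matrix_min_eigenvalue:
  fixes G :: "real^'n^'n"
  assumes sym: "transpose G = G"
  obtains m v where "v \<noteq> 0" "G *v v = m *\<^sub>R v" "\<And>x. m * (norm x)\<^sup>2 \<le> x \<bullet> (G *v x)"
proof -
  let ?q = "\<lambda>x. x \<bullet> (G *v x)"
  have "continuous_on (sphere 0 1) ?q"
    by (intro continuous_on_inner continuous_on_id linear_continuous_on matrix_vector_mul_bounded_linear)
  moreover have "axis undefined 1 \<in> sphere (0::real^'n) 1"
    by (simp only: mem_sphere_0 norm_axis_1)
  ultimately obtain v where v: "v \<in> sphere 0 1" and min: "\<And>y. y \<in> sphere 0 1 \<Longrightarrow> ?q v \<le> ?q y"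
    using continuous_attains_inf[OF compact_sphere] by blast
  define m where "m = ?q v"
  have bound: "m * (norm x)\<^sup>2 \<le> ?q x" for x
  proof (cases "x = 0")
    case False
    have "(1 / norm x) *\<^sub>R x \<in> sphere 0 1"
      using False by simp
    then have "m \<le> ?q ((1 / norm x) *\<^sub>R x)"
      using min by (simp only: m_def)
    also have "\<dots> = ?q x / (norm x)\<^sup>2"
      by (simp add: matrix_vector_mult_scaleR power2_eq_square)
    finally show ?thesis
      using False by (simp add: field_simps)
  qed simp
  have "G *v v = m *\<^sub>R v"
    using rayleigh_bound_attained_imp_eigenvector[OF sym bound] v by (simp add: m_def)
  moreover have "v \<noteq> 0" using v by auto
  ultimately show thesis using that bound by blast
qed

lemma symmetric_matrix_eigenvalues_finite:
  fixes G :: "real^'n^'n"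
  assumes sym: "transpose G = G"
  shows "finite {l. real_eigenvalue G l}"
proof -
  let ?E = "{l. real_eigenvalue G l}"
  define f where "f l = (SOME v. v \<noteq> 0 \<and> G *v v = l *\<^sub>R v)" for l
  have f: "f l \<noteq> 0 \<and> G *v f l = l *\<^sub>R f l" if "l \<in> ?E" for l
    using that unfolding f_def real_eigenvalue_def by (metis (mono_tags, lifting) mem_Collect_eq someI_ex)
  have inj: "inj_on f ?E"
    by (rule inj_onI) (metis f scaleR_cancel_right)
  have orth: "orthogonal (f l) (f l')" if "l \<in> ?E" "l' \<in> ?E" "f l \<noteq> f l'" for l l'
  proof -
    have "l * (f l' \<bullet> f l) = f l' \<bullet> (G *v f l)" using f[OF that(1)] by simp
    also have "\<dots> = f l \<bullet> (G *v f l')" by (rule inner_matrix_vector_symmetric[OF sym])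
    also have "\<dots> = l' * (f l \<bullet> f l')" using f[OF that(2)] by simp
    finally have "(l - l') * (f l \<bullet> f l') = 0" by (simp add: inner_commute algebra_simps)
    then show ?thesis using that(3) by (auto simp: orthogonal_def)
  qed
  have "independent (f ` ?E)"
    using f orth by (intro pairwise_orthogonal_independent) (auto simp: pairwise_def)
  then have "finite (f ` ?E)" using independent_bound by blast
  then show ?thesis using inj finite_imageD by blast
qed

lemma lambda_min_symmetric:
  fixes G :: "real^'n^'n"
  assumes sym: "transpose G = G"
  shows "real_eigenvalue G (lambda_min G)"
    and "lambda_min G * (norm x)\<^sup>2 \<le> x \<bullet> (G *v x)"
proof -
  obtain m v where v: "v \<noteq> 0" "G *v v = m *\<^sub>R v" and bound: "\<And>x. m * (norm x)\<^sup>2 \<le> x \<bullet> (G *v x)"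
    using symmetric_matrix_min_eigenvalue[OF sym] by blast
  have m: "real_eigenvalue G m" using v unfolding real_eigenvalue_def by blast
  have "m \<le> l" if l: "real_eigenvalue G l" for l
  proof -
    obtain u where u: "u \<noteq> 0" "G *v u = l *\<^sub>R u"
      using l unfolding real_eigenvalue_def by blast
    have "m * (norm u)\<^sup>2 \<le> l * (norm u)\<^sup>2"
      using bound[of u] unfolding quadratic_form_eigenvector[OF u(2)] .
    moreover have "0 < (norm u)\<^sup>2" using u(1) by simp
    ultimately show ?thesis using mult_le_cancel_right_pos by blast
  qed
  then have "lambda_min G = m"
    unfolding lambda_min_def
    by (intro Min_eqI symmetric_matrix_eigenvalues_finite[OF sym]) (auto intro: m)
  then show "real_eigenvalue G (lambda_min G)" "lambda_min G * (norm x)\<^sup>2 \<le> x \<bullet> (G *v x)"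
    using m bound[of x] by simp_all
qed

lemma lambda_min_pos:
  assumes "pos_def_mat G"
  shows "0 < lambda_min G"
proof -
  have sym: "transpose G = G" using assms unfolding pos_def_mat_def by blast
  obtain v where v: "v \<noteq> 0" "G *v v = lambda_min G *\<^sub>R v"
    using lambda_min_symmetric(1)[OF sym] unfolding real_eigenvalue_def by (elim exE conjE)
  have "0 < v \<bullet> (G *v v)" using assms v(1) unfolding pos_def_mat_def by blast
  then show ?thesis
    using quadratic_form_eigenvector[OF v(2)] v(1) by (simp add: zero_less_mult_iff)
qed

section \<open>Integer minimisers of a positive definite quadratic form\<close>

definition int_minimizer :: "real^'n^'n \<Rightarrow> real^'n \<Rightarrow> bool" where
  "int_minimizer G a \<longleftrightarrow> int_vec a \<and> a \<noteq> 0 \<and>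
     (\<forall>b. int_vec b \<and> b \<noteq> 0 \<longrightarrow> a \<bullet> (G *v a) \<le> b \<bullet> (G *v b))"

lemma int_vec_axis: "int_vec (axis i (1::real))"
  unfolding int_vec_def by (simp add: axis_def)

lemma int_vec_add_int_axis:
  assumes "int_vec a" "t \<in> \<int>"
  shows "int_vec (a + t *\<^sub>R axis i 1)"
  using assms unfolding int_vec_def by (simp add: axis_def)

lemma int_minimizer_le_diag:
  assumes "int_minimizer G a"
  shows "a \<bullet> (G *v a) \<le> G $ i $ i"
  using assms int_vec_axis[of i] quadratic_form_axis[of i G]
  unfolding int_minimizer_def by (metis axis_eq_0_iff zero_neq_one)

lemma int_minimizer_norm_le:
  assumes "pos_def_mat G" "int_minimizer G a"
  shows "norm a \<le> sqrt (G_min G / lambda_min G)"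
proof -
  have "finite {G $ i $ i | i. True}" by (simp add: full_SetCompr_eq)
  then obtain j where j: "G_min G = G $ j $ j"
    using Min_in unfolding G_min_def by blast
  have "lambda_min G * (norm a)\<^sup>2 \<le> a \<bullet> (G *v a)"
    using assms(1) lambda_min_symmetric(2) unfolding pos_def_mat_def by blast
  also have "\<dots> \<le> G_min G"
    using int_minimizer_le_diag[OF assms(2)] j by simp
  finally have "(norm a)\<^sup>2 \<le> G_min G / lambda_min G"
    using lambda_min_pos[OF assms(1)] by (simp add: field_simps)
  then show ?thesis by (rule real_le_rsqrt)
qed

lemma int_minimizer_coordinate_bound:
  assumes sym: "transpose G = G" and min: "int_minimizer G a"
    and "a \<noteq> axis i 1" "a \<noteq> - axis i 1"
  shows "2 * \<bar>(G *v a) $ i\<bar> \<le> G $ i $ i"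
proof -
  have "a \<bullet> (G *v a) \<le> a \<bullet> (G *v a) + 2 * t * (G *v a) $ i + t\<^sup>2 * G $ i $ i"
    if "t \<in> {1, -1}" for t :: real
  proof -
    have "a + t *\<^sub>R axis i 1 \<noteq> 0"
      using that assms(3,4) by (auto simp: add_eq_0_iff2)
    then show ?thesis
      using min int_vec_add_int_axis[of a t i] that quadratic_form_add_axis[OF sym, of a t i]
      unfolding int_minimizer_def by auto
  qed
  from this[of 1] this[of "-1"] show ?thesis by simp
qed

section \<open>Diagonal minus low rank\<close>

lemma matrix_vector_mult_component_single:
  fixes A :: "'a::comm_semiring_1^'n^'m"
  assumes "\<And>j. j \<noteq> i \<Longrightarrow> A $ k $ j = 0"
  shows "(A *v x) $ k = A $ k $ i * x $ i"
proof -
  have "(\<Sum>j\<in>UNIV. A $ k $ j * x $ j) = (\<Sum>j\<in>{i}. A $ k $ j * x $ j)"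
    by (rule sum.mono_neutral_right) (auto simp: assms)
  then show ?thesis by (simp add: matrix_vector_mult_def)
qed

lemma matrix_inv_diag:
  fixes D :: "real^'n^'n"
  assumes D: "\<And>i j. D $ i $ j = (if i = j then d i else 0)" and d: "\<And>i. d i \<noteq> 0"
  shows "matrix_inv D = (\<chi> i j. if i = j then 1 / d i else 0)" (is "_ = ?E")
proof -
  have DE: "D ** ?E = mat 1"
    unfolding matrix_matrix_mult_def mat_def
    by (simp add: D d vec_eq_iff if_distrib[of "\<lambda>x. x * _"] sum.delta cong: if_cong)
  have ED: "?E ** D = mat 1"
    unfolding matrix_matrix_mult_def mat_def
    by (simp add: D d vec_eq_iff if_distrib[of "\<lambda>x. _ * x"] sum.delta cong: if_cong)
  have "\<exists>M. D ** M = mat 1 \<and> M ** D = mat 1"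
    using DE ED by blast
  then have inv: "D ** matrix_inv D = mat 1 \<and> matrix_inv D ** D = mat 1"
    unfolding matrix_inv_def by (rule someI_ex)
  have "matrix_inv D = matrix_inv D ** (D ** ?E)"
    by (simp add: DE matrix_mul_rid)
  also have "\<dots> = (matrix_inv D ** D) ** ?E"
    by (rule matrix_mul_assoc)
  also have "\<dots> = ?E"
    by (simp add: inv matrix_mul_lid)
  finally show ?thesis .
qed

lemma matrix_inv_diagonal_mat:
  fixes D :: "real^'n^'n"
  assumes "diagonal_mat D" "\<And>i. D $ i $ i \<noteq> 0"
  shows "matrix_inv D *v y = (\<chi> i. y $ i / D $ i $ i)"
proof -
  have "D $ i $ j = (if i = j then D $ i $ i else 0)" for i j
    using assms(1) unfolding diagonal_mat_def by auto
  then have "matrix_inv D = (\<chi> i j. if i = j then 1 / D $ i $ i else 0)"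
    using assms(2) by (rule matrix_inv_diag)
  then show ?thesis
    by (simp add: vec_eq_iff matrix_vector_mult_def if_distrib[of "\<lambda>x. x * _"] sum.delta cong: if_cong)
qed

lemma diag_eq_diag_plus_row_norm:
  fixes G D :: "real^'n^'n" and V :: "real^'k^'n"
  assumes "G = D - V ** transpose V"
  shows "D $ i $ i = G $ i $ i + (\<Sum>k\<in>UNIV. (V $ i $ k)\<^sup>2)"
  using assms by (simp add: matrix_matrix_mult_def transpose_def power2_eq_square)

lemma low_rank_rounding_point:
  fixes G D :: "real^'n^'n" and V :: "real^'k^'n"
  assumes G: "G = D - V ** transpose V" and D: "diagonal_mat D" "\<And>i. D $ i $ i \<noteq> 0"
  shows "(matrix_inv D *v (V *v (transpose V *v a))) $ i = a $ i - (G *v a) $ i / D $ i $ i"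
proof -
  have "V *v (transpose V *v a) = (D - G) *v a"
    unfolding matrix_vector_mul_assoc using G by simp
  also have "\<dots> = D *v a - G *v a"
    by (rule matrix_vector_mult_diff_rdistrib)
  finally have Vx: "V *v (transpose V *v a) = D *v a - G *v a" .
  have Da: "(D *v a) $ i = D $ i $ i * a $ i"
    using D(1) unfolding diagonal_mat_def by (intro matrix_vector_mult_component_single) auto
  show ?thesis
    unfolding matrix_inv_diagonal_mat[OF D] Vx using D(2)[of i] by (simp add: Da field_simps)
qed

text \<open>The gap \<open>G\<^sub>i\<^sub>i \<le> D\<^sub>i\<^sub>i\<close> is strict unless row \<open>i\<close> of \<open>V\<close> vanishes; then row \<open>i\<close>
  of \<open>G\<close> is \<open>G\<^sub>i\<^sub>i u\<^sub>i\<^sup>T\<close> and the coordinate bound forces the integer \<open>a\<^sub>i\<close> to be \<open>0\<close>.\<close>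

lemma low_rank_coordinate_gap:
  fixes G D :: "real^'n^'n" and V :: "real^'k^'n"
  assumes G: "G = D - V ** transpose V" and D: "diagonal_mat D"
    and a: "a $ i \<in> \<int>" and pos: "0 < G $ i $ i" and bound: "2 * \<bar>(G *v a) $ i\<bar> \<le> G $ i $ i"
  shows "2 * \<bar>(G *v a) $ i\<bar> < D $ i $ i"
proof (cases "\<forall>k. V $ i $ k = 0")
  case True
  then have "G $ i $ j = 0" if "j \<noteq> i" for j
    using G D that unfolding diagonal_mat_def by (simp add: matrix_matrix_mult_def)
  then have Ga: "(G *v a) $ i = G $ i $ i * a $ i"
    by (rule matrix_vector_mult_component_single)
  obtain z where z: "a $ i = of_int z"
    using a by (auto elim: Ints_cases)
  have "2 * \<bar>a $ i\<bar> \<le> 1"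
    using bound pos by (simp add: Ga abs_mult)
  then have "\<bar>real_of_int z\<bar> < 1" using z by simp
  then have "z = 0" by linarith
  then have "a $ i = 0" using z by simp
  then show ?thesis
    using pos diag_eq_diag_plus_row_norm[OF G, of i] True by (simp add: Ga)
next
  case False
  then obtain k where "V $ i $ k \<noteq> 0" by blast
  then have "0 < (\<Sum>k\<in>UNIV. (V $ i $ k)\<^sup>2)"
    by (intro sum_pos2[of UNIV k]) auto
  then show ?thesis
    using bound diag_eq_diag_plus_row_norm[OF G, of i] by linarith
qed

lemma low_rank_minimizer_near_rounding_point:
  fixes G D :: "real^'n^'n" and V :: "real^'k^'n"
  assumes pd: "pos_def_mat G" and D: "diagonal_mat D" and G: "G = D - V ** transpose V"
    and min: "int_minimizer G a" and not_unit: "\<not> (\<exists>i. a = axis i 1 \<or> a = - axis i 1)"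
  shows "\<bar>(matrix_inv D *v (V *v (transpose V *v a))) $ i - a $ i\<bar> < 1/2"
proof -
  have sym: "transpose G = G" using pd unfolding pos_def_mat_def by blast
  have gap: "2 * \<bar>(G *v a) $ j\<bar> < D $ j $ j" for j
  proof (rule low_rank_coordinate_gap[OF G D])
    show "a $ j \<in> \<int>" using min unfolding int_minimizer_def int_vec_def by blast
    show "0 < G $ j $ j" using pd by (rule pos_def_mat_diag_pos)
    show "2 * \<bar>(G *v a) $ j\<bar> \<le> G $ j $ j"
      using not_unit by (intro int_minimizer_coordinate_bound[OF sym min]) auto
  qed
  have Dpos: "0 < D $ j $ j" for j
    using gap[of j] abs_ge_zero[of "(G *v a) $ j"] by linarith
  have Dnz: "D $ j $ j \<noteq> 0" for j
    using Dpos[of j] by simp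
  have "(matrix_inv D *v (V *v (transpose V *v a))) $ i - a $ i = - ((G *v a) $ i / D $ i $ i)"
    using low_rank_rounding_point[OF G D Dnz, of a i] by simp
  then have "\<bar>(matrix_inv D *v (V *v (transpose V *v a))) $ i - a $ i\<bar> =
      \<bar>(G *v a) $ i\<bar> / D $ i $ i"
    using Dpos[of i] by (simp add: abs_divide)
  also have "\<dots> < 1/2"
    using gap[of i] Dpos[of i] by (simp add: pos_divide_less_eq)
  finally show ?thesis .
qed

lemma int_eq_round:
  fixes r c :: real
  assumes "r \<in> \<int>" "\<bar>c - r\<bar> < 1/2"
  shows "r = of_int (round c)"
  using assms by (metis Ints_cases round_unique')

theorem theorem2:
  fixes G D :: "real^'n^'n" and V :: "real^'k^'n" and a :: "real^'n"
  assumes "pos_def_mat G"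
    and "diagonal_mat D"
    and "lin_indep_cols V"
    and "G = D - V ** transpose V"
    and "int_vec a" and "a \<noteq> 0"
    and "\<forall>b. int_vec b \<and> b \<noteq> 0 \<longrightarrow> a \<bullet> (G *v a) \<le> b \<bullet> (G *v b)"
  shows "((\<exists>i. a = axis i 1 \<or> a = - axis i 1) \<or>
          (\<exists>x :: real^'k.
             (\<forall>i. a $ i - 1/2 < (matrix_inv D *v (V *v x)) $ i \<and>
                  (matrix_inv D *v (V *v x)) $ i < a $ i + 1/2) \<and>
             (\<forall>i. a $ i = of_int (round ((matrix_inv D *v (V *v x)) $ i)))))
         \<and> norm a \<le> sqrt (G_min G / lambda_min G)"
proof -
  have min: "int_minimizer G a"
    using assms(5-7) unfolding int_minimizer_def by blast
  moreover have "(\<exists>x :: real^'k.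
             (\<forall>i. a $ i - 1/2 < (matrix_inv D *v (V *v x)) $ i \<and>
                  (matrix_inv D *v (V *v x)) $ i < a $ i + 1/2) \<and>
             (\<forall>i. a $ i = of_int (round ((matrix_inv D *v (V *v x)) $ i))))"
    if not_unit: "\<not> (\<exists>i. a = axis i 1 \<or> a = - axis i 1)"
  proof (intro exI conjI allI)
    fix i
    have near: "\<bar>(matrix_inv D *v (V *v (transpose V *v a))) $ i - a $ i\<bar> < 1/2"
      using low_rank_minimizer_near_rounding_point[OF assms(1,2,4) min not_unit] .
    then show "a $ i - 1/2 < (matrix_inv D *v (V *v (transpose V *v a))) $ i"
      and "(matrix_inv D *v (V *v (transpose V *v a))) $ i < a $ i + 1/2"
      unfolding abs_less_iff by linarith+
    show "a $ i = of_int (round ((matrix_inv D *v (V *v (transpose V *v a))) $ i))"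
      using assms(5) near unfolding int_vec_def by (intro int_eq_round) auto
  qed
  ultimately show ?thesis
    using int_minimizer_norm_le[OF assms(1)] by blast
qed

end
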